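(* Algorithm A with $m=n$ registers solves obstruction-free consensus among the $n$ anonymous processes, i.e., in every execution: (Validity) every decided value was proposed by some process; (Agreement) no two processes decide different values; (OB-termination) if there is a time after which a single process executes steps alone, that process decides; (SV-termination) if all processes propose the same value, every correct (non-crashed) process decides.
   Context: Quadruplets, lexicographic order: a quadruplet is $\langle rd,\mathit{lvl},\mathit{cfl},\mathit{val}\rangle$ with $rd\in\mathbb{N}$, $\mathit{lvl}\in\{\mathtt{down}<\mathtt{up}\}$, $\mathit{cfl}\in\{\mathtt{false}<\mathtt{true}\}$, $\mathit{val}$ in a totally ordered value set with a least default $\bot$; quadruplets are totally ordered lexicographically. For a nonempty finite set $T$ of quadruplets with lexicographic maximum $\langle r,\ell,c,v\rangle$, $\mathrm{sup}(T)=\langle r,\ell,\mathit{conflict}(T),v\rangle$ where $\mathit{conflict}(T)$ holds iff some element of $T$ of round $r$ has conflict field $\mathtt{true}$, or the elements of $T$ of round $r$ carry at least two distinct values. Model and Algorithm A: $n$ anonymous asynchronous processes (identical code, no identities; any number may crash, a crashed process takes no further steps) share an atomic snapshot object $\mathit{REG}[1..m]$ of multi-writer registers, each initially $\langle 0,\mathtt{down},\mathtt{false},\bot\rangle$, with atomic operations $\mathrm{snapshot}()$ (returns the whole array) and $\mathrm{write}(x,X)$; executions are interleavings of atomic steps. Each process proposes one value $v\neq\bot$ by invoking the following, and decides the value it returns: repeat forever: $\mathit{view}\leftarrow\mathrm{snapshot}()$; then (1) if all entries equal $\langle r,\mathtt{up},\mathtt{false},w\rangle$ with $r>0$, return $w$;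 (2) else if all entries equal $\langle r,\mathtt{down},\mathtt{false},w\rangle$ with $r>0$, write $\langle r+1,\mathtt{up},\mathtt{false},w\rangle$ into $\mathit{REG}[1]$; (3) else if all entries equal $\langle r,\ell,\mathtt{true},w\rangle$ with $r>0$, write $\langle r+1,\mathtt{down},\mathtt{false},w\rangle$ into $\mathit{REG}[1]$; (4) otherwise compute $S=\mathrm{sup}(\{\mathit{view}[1],\dots,\mathit{view}[m],\langle 1,\mathtt{down},\mathtt{false},v\rangle\})$, let $x$ be the smallest index with $\mathit{view}[x]\neq S$, and write $S$ into $\mathit{REG}[x]$. *)

theory Defs
  imports Main "HOL-Library.Product_Lexorder" "HOL-Library.Option_ord"
begin

(* Quadruplet <rd, lvl, cfl, val>.
   lvl : False = down < True = up;  cfl : False < True;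
   val : None = bottom (least), Some v for proper values (v :: 'v :: linorder).
   The product order (Product_Lexorder) is lexicographic; Option_ord makes None least. *)
type_synonym 'v quad = "nat \<times> bool \<times> bool \<times> 'v option"

definition rd :: "'v quad \<Rightarrow> nat" where "rd q = fst q"
definition lvl :: "'v quad \<Rightarrow> bool" where "lvl q = fst (snd q)"
definition cfl :: "'v quad \<Rightarrow> bool" where "cfl q = fst (snd (snd q))"
definition val :: "'v quad \<Rightarrow> 'v option" where "val q = snd (snd (snd q))"

definition conflict :: "('v::linorder) quad set \<Rightarrow> bool" where
  "conflict T = (let r = rd (Max T) in
     (\<exists>q\<in>T. rd q = r \<and> cfl q) \<or>
     (\<exists>q1\<in>T. \<exists>q2\<in>T. rd q1 = r \<and> rd q2 = r \<and> val q1 \<noteq> val q2))"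

definition qsup :: "('v::linorder) quad set \<Rightarrow> 'v quad" where
  "qsup T = (rd (Max T), lvl (Max T), conflict T, val (Max T))"

(* registers REG[1..m] are modelled as indices 0..<m; REG[1] is index 0 *)
type_synonym 'v memory = "nat \<Rightarrow> 'v quad"

datatype 'v pc = Snap | Wr nat "'v quad" | Done "'v option"

definition init_quad :: "'v quad" where "init_quad = (0, False, False, None)"

(* the snapshot step together with the local computation following it *)
definition after_snapshot :: "nat \<Rightarrow> ('v::linorder) \<Rightarrow> 'v memory \<Rightarrow> 'v pc" where
  "after_snapshot m v view =
     (if \<exists>r w. r > 0 \<and> (\<forall>i<m. view i = (r, True, False, w))
      then Done (val (view 0))
      else if \<exists>r w. r > 0 \<and> (\<forall>i<m. view i = (r, False, False, w))
      then Wr 0 (rd (view 0) + 1, True, False, val (view 0))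
      else if \<exists>r l w. r > 0 \<and> (\<forall>i<m. view i = (r, l, True, w))
      then Wr 0 (rd (view 0) + 1, False, False, val (view 0))
      else (let S = qsup (view ` {..<m} \<union> {(1, False, False, Some v)})
            in Wr (LEAST x. x < m \<and> view x \<noteq> S) S))"

fun proc_step :: "nat \<Rightarrow> ('v::linorder) \<Rightarrow> 'v memory \<times> 'v pc \<Rightarrow> 'v memory \<times> 'v pc" where
  "proc_step m v (mem, Snap) = (mem, after_snapshot m v mem)"
| "proc_step m v (mem, Wr x q) = (mem(x := q), Snap)"
| "proc_step m v (mem, Done w) = (mem, Done w)"

type_synonym 'v config = "'v memory \<times> (nat \<Rightarrow> 'v pc)"

definition sys_step :: "nat \<Rightarrow> (nat \<Rightarrow> ('v::linorder)) \<Rightarrow> nat \<Rightarrow> 'v config \<Rightarrow> 'v config" where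
  "sys_step m props p c =
     (let (mem', pc') = proc_step m (props p) (fst c, snd c p) in (mem', (snd c)(p := pc')))"

primrec run :: "nat \<Rightarrow> (nat \<Rightarrow> ('v::linorder)) \<Rightarrow> (nat \<Rightarrow> nat) \<Rightarrow> nat \<Rightarrow> 'v config" where
  "run m props sched 0 = (\<lambda>_. init_quad, \<lambda>_. Snap)"
| "run m props sched (Suc t) = sys_step m props (sched t) (run m props sched t)"

definition decides_at :: "nat \<Rightarrow> (nat \<Rightarrow> ('v::linorder)) \<Rightarrow> (nat \<Rightarrow> nat) \<Rightarrow> nat \<Rightarrow> nat \<Rightarrow> 'v option \<Rightarrow> bool" where
  "decides_at m props sched t p w = (snd (run m props sched t) p = Done w)"

end

theory Submission
  imports Defs
begin

text \<open>Call a quadruplet \<open>Y\<close> compatible with \<open>X\<close> if \<open>X \<le> Y\<close> and, in case both have the same round,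
  \<open>Y\<close> carries the value of \<open>X\<close> or a conflict. Right after a uniform snapshot of \<open>X\<close> all \<open>n\<close>
  registers hold \<open>X\<close>; from then on the incompatible registers plus the incompatible pending writes
  number less than \<open>n\<close>, because a snapshot seeing one compatible register only produces compatible
  writes. So every later uniform snapshot is compatible with \<open>X\<close>. A decision is taken on a
  conflict-free \<open>up\<close> uniform view, which stems from a conflict-free \<open>down\<close> uniform view of the
  previous round; hence all later uniform views carry the decided value, giving agreement, and
  values are only copied, giving validity. Termination follows from potential functions: a solo
  process passes through at most a conflict, a \<open>down\<close> and an \<open>up\<close> round, and with a common proposal
  only three quadruplets occur, every write except \<open>up\<close> over \<open>up\<close> decreasing a weighted count.\<close>


section \<open>Quadruplets and their supremum\<close>

lemma quad_sel [simp]: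
  "rd (r, l, c, w) = r" "lvl (r, l, c, w) = l" "cfl (r, l, c, w) = c" "val (r, l, c, w) = w"
  by (simp_all add: rd_def lvl_def cfl_def val_def)

lemma quad_eqI:
  "rd X = rd Y \<Longrightarrow> lvl X = lvl Y \<Longrightarrow> cfl X = cfl Y \<Longrightarrow> val X = val Y \<Longrightarrow> (X::'v quad) = Y"
  by (cases X; cases Y) simp

lemma quad_le_iff:
  "(X::'v::linorder quad) \<le> Y \<longleftrightarrow>
     rd X < rd Y \<or> rd X = rd Y \<and> (lvl X < lvl Y \<or> lvl X = lvl Y \<and>
       (cfl X < cfl Y \<or> cfl X = cfl Y \<and> val X \<le> val Y))"
  by (cases X; cases Y) (auto simp: rd_def lvl_def cfl_def val_def less_eq_prod_def less_prod_def)

lemma rd_mono: "(X::'v::linorder quad) \<le> Y \<Longrightarrow> rd X \<le> rd Y"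
  by (auto simp: quad_le_iff)

lemma quad_less_if_rd_less: "rd X < rd Y \<Longrightarrow> (X::'v::linorder quad) < Y"
  by (metis less_le quad_le_iff nat_less_le)

lemma qsup_sel [simp]:
  "rd (qsup T) = rd (Max T)" "lvl (qsup T) = lvl (Max T)" "cfl (qsup T) = conflict T"
  "val (qsup T) = val (Max T)"
  by (simp_all add: qsup_def)

lemma conflictI_cfl: "q \<in> T \<Longrightarrow> rd q = rd (Max T) \<Longrightarrow> cfl q \<Longrightarrow> conflict T"
  unfolding conflict_def Let_def by blast

lemma conflictI_val:
  "q \<in> T \<Longrightarrow> q' \<in> T \<Longrightarrow> rd q = rd (Max T) \<Longrightarrow> rd q' = rd (Max T) \<Longrightarrow> val q \<noteq> val q'
   \<Longrightarrow> conflict T"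
  unfolding conflict_def Let_def by blast

lemma top_round_if_not_conflict:
  assumes "finite T" "\<not> conflict T" "q \<in> T" "rd q = rd (Max T)"
  shows "\<not> cfl q \<and> val q = val (Max T)"
proof -
  have "T \<noteq> {}" using assms(3) by blast
  then show ?thesis
    using assms conflictI_cfl[of q T] conflictI_val[of q T "Max T"] Max_in[of T] by blast
qed

lemma qsup_upper:
  assumes "finite T" "q \<in> T"
  shows "q \<le> (qsup T :: 'v::linorder quad)"
proof -
  have "T \<noteq> {}" using assms(2) by blast
  then have "cfl (Max T) \<Longrightarrow> conflict T"
    using assms(1) by (intro conflictI_cfl[of "Max T"]) auto
  then have "Max T \<le> qsup T"
    unfolding quad_le_iff by (cases "cfl (Max T)"; cases "conflict T") auto
  then show ?thesis using Max_ge[OF assms] by order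
qed

lemma qsup_eqI:
  assumes "finite T" "S \<in> T" "\<And>q. q \<in> T \<Longrightarrow> q \<le> S"
    and "\<And>q. \<not> cfl S \<Longrightarrow> q \<in> T \<Longrightarrow> rd q = rd S \<Longrightarrow> \<not> cfl q \<and> val q = val S"
  shows "qsup T = (S :: 'v::linorder quad)"
proof -
  have Max: "Max T = S" using assms(1-3) by (intro Max_eqI)
  have "conflict T \<longleftrightarrow> cfl S"
  proof
    assume "conflict T"
    then show "cfl S" using assms(4) unfolding conflict_def Let_def Max by metis
  qed (use assms(1,2) Max in \<open>auto intro: conflictI_cfl\<close>)
  then show ?thesis by (intro quad_eqI) (simp_all add: Max)
qed

lemma qsup_subset_insert_qsup:
  assumes "finite T" "qsup T \<in> T'" "T' \<subseteq> insert (qsup T) T"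
  shows "qsup T' = (qsup T :: 'v::linorder quad)"
proof (rule qsup_eqI)
  show "finite T'" using assms(1,3) finite_subset by blast
  show "q \<le> qsup T" if "q \<in> T'" for q
    using that assms(1,3) qsup_upper by blast
  show "\<not> cfl q \<and> val q = val (qsup T)" if "\<not> cfl (qsup T)" "q \<in> T'" "rd q = rd (qsup T)" for q
  proof (cases "q = qsup T")
    case False
    then have "q \<in> T" using that(2) assms(3) by blast
    with that show ?thesis using top_round_if_not_conflict[OF assms(1)] by simp
  qed (use that in simp)
qed (rule assms(2))

definition proposal_quad :: "'v \<Rightarrow> 'v quad" where
  "proposal_quad v = (1, False, False, Some v)"

definition uniform :: "nat \<Rightarrow> 'v memory \<Rightarrow> bool" where
  "uniform m V \<longleftrightarrow> 0 < rd (V 0) \<and> (\<forall>i<m. V i = V 0)"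

text \<open>Cases (2) and (3) of the algorithm merged: the new level is \<open>up\<close> exactly when the uniform
  entry is \<open>down\<close> without conflict.\<close>

definition next_round :: "'v quad \<Rightarrow> 'v quad" where
  "next_round Q = (rd Q + 1, \<not> lvl Q \<and> \<not> cfl Q, False, val Q)"

lemma rd_next_round [simp]: "rd (next_round Q) = rd Q + 1"
  by (simp add: next_round_def)

lemma uniform_all: "uniform m V \<Longrightarrow> i < m \<Longrightarrow> V i = V 0"
  unfolding uniform_def by blast

lemma ex_uniform_quad_iff:
  assumes "0 < m"
  shows "(\<exists>r w. 0 < r \<and> (\<forall>i<m. V i = (r, l, c, w))) \<longleftrightarrow>
    uniform m V \<and> lvl (V 0) = l \<and> cfl (V 0) = c"
proof
  assume "\<exists>r w. 0 < r \<and> (\<forall>i<m. V i = (r, l, c, w))"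
  then obtain r w where r: "0 < r" and all: "\<forall>i<m. V i = (r, l, c, w)" by blast
  then have V0: "V 0 = (r, l, c, w)" using assms by blast
  show "uniform m V \<and> lvl (V 0) = l \<and> cfl (V 0) = c"
    unfolding uniform_def V0 using r all by simp
next
  assume u: "uniform m V \<and> lvl (V 0) = l \<and> cfl (V 0) = c"
  then have "V 0 = (rd (V 0), l, c, val (V 0))" by (intro quad_eqI) simp_all
  then have "\<forall>i<m. V i = (rd (V 0), l, c, val (V 0))" using u uniform_all by metis
  moreover have "0 < rd (V 0)" using u by (simp add: uniform_def)
  ultimately show "\<exists>r w. 0 < r \<and> (\<forall>i<m. V i = (r, l, c, w))" by blast
qed

lemma ex_conflicting_uniform_quad_iff:
  "0 < m \<Longrightarrow> (\<exists>r l w. 0 < r \<and> (\<forall>i<m. V i = (r, l, True, w))) \<longleftrightarrow> uniform m V \<and> cfl (V 0)"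
  using ex_uniform_quad_iff[of m V _ True] by blast

lemma after_snapshot_uniform:
  assumes "0 < m" "uniform m V"
  shows "after_snapshot m v V =
    (if lvl (V 0) \<and> \<not> cfl (V 0) then Done (val (V 0)) else Wr 0 (next_round (V 0)))"
  unfolding after_snapshot_def ex_uniform_quad_iff[OF assms(1)]
    ex_conflicting_uniform_quad_iff[OF assms(1)] next_round_def
  using assms(2) by (cases "lvl (V 0)"; cases "cfl (V 0)") simp_all

lemma after_snapshot_nonuniform:
  assumes "0 < m" "\<not> uniform m V"
  shows "after_snapshot m v V =
    (let S = qsup (V ` {..<m} \<union> {proposal_quad v}) in Wr (LEAST x. x < m \<and> V x \<noteq> S) S)"
  unfolding after_snapshot_def ex_uniform_quad_iff[OF assms(1)]
    ex_conflicting_uniform_quad_iff[OF assms(1)] proposal_quad_def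
  using assms(2) by simp

lemma after_snapshot_uniform_Wr:
  assumes "0 < m" "uniform m V" "after_snapshot m v V = Wr x Y"
  shows "x = 0 \<and> Y = next_round (V 0)"
  using assms(3) unfolding after_snapshot_uniform[OF assms(1,2)] by (simp split: if_splits)

lemma after_snapshot_Done:
  assumes "0 < m" "after_snapshot m v V = Done w"
  shows "uniform m V \<and> lvl (V 0) \<and> \<not> cfl (V 0) \<and> w = val (V 0)"
proof (cases "uniform m V")
  case True
  then show ?thesis using assms(2) unfolding after_snapshot_uniform[OF assms(1) True]
    by (simp split: if_splits)
next
  case False
  then show ?thesis using assms(2) unfolding after_snapshot_nonuniform[OF assms(1) False]
    by (simp add: Let_def)
qed

lemma after_snapshot_neq_Snap: "0 < m \<Longrightarrow> after_snapshot m v V \<noteq> Snap"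
  by (cases "uniform m V") (simp_all add: after_snapshot_uniform after_snapshot_nonuniform Let_def)

text \<open>The target register exists because the supremum has a positive round.\<close>

lemma after_snapshot_nonuniform_Wr:
  assumes "0 < m" "\<not> uniform m V" "after_snapshot m v V = Wr x Y"
  shows "Y = qsup (V ` {..<m} \<union> {proposal_quad v}) \<and> x < m \<and> V x \<noteq> Y"
proof -
  define T where "T = V ` {..<m} \<union> {proposal_quad v}"
  have "Wr (LEAST x. x < m \<and> V x \<noteq> qsup T) (qsup T) = Wr x Y"
    using assms(3) unfolding after_snapshot_nonuniform[OF assms(1,2)] Let_def T_def .
  then have Y: "Y = qsup T" and x: "x = (LEAST x. x < m \<and> V x \<noteq> qsup T)"
    by (metis pc.inject(1))+
  have "proposal_quad v \<le> qsup T"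
    by (rule qsup_upper) (simp_all add: T_def)
  then have "0 < rd (qsup T)"
    using rd_mono[OF \<open>proposal_quad v \<le> qsup T\<close>] by (simp add: proposal_quad_def)
  then have "\<exists>x. x < m \<and> V x \<noteq> qsup T"
    using assms(1,2) unfolding uniform_def by metis
  then show ?thesis using LeastI_ex[of "\<lambda>x. x < m \<and> V x \<noteq> qsup T"] x Y T_def by auto
qed

definition compatible :: "'v::linorder quad \<Rightarrow> 'v quad \<Rightarrow> bool" where
  "compatible X Y \<longleftrightarrow> X \<le> Y \<and> (rd Y = rd X \<longrightarrow> val Y = val X \<or> cfl Y)"

lemma compatible_refl [simp]: "compatible X X"
  by (simp add: compatible_def)

lemma compatible_if_rd_less: "rd X < rd Y \<Longrightarrow> compatible X Y"
  by (simp add: compatible_def quad_less_if_rd_less less_imp_le)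

lemma compatible_qsup:
  assumes "finite T" "Y \<in> T" "compatible X Y"
  shows "compatible X (qsup T)"
  unfolding compatible_def
proof (intro conjI impI)
  have "Y \<le> qsup T" using assms(1,2) by (rule qsup_upper)
  then show "X \<le> qsup T" using assms(3) order_trans unfolding compatible_def by blast
  assume same_rd: "rd (qsup T) = rd X"
  have "X \<le> Y" using assms(3) by (simp add: compatible_def)
  moreover have "Y \<le> Max T" using assms(1,2) by (rule Max_ge)
  ultimately have "rd X \<le> rd Y" "rd Y \<le> rd (Max T)" by (simp_all add: rd_mono)
  then have "rd Y = rd X" "rd Y = rd (Max T)" using same_rd by simp_all
  then have "val Y = val X \<or> cfl Y" using assms(3) by (simp add: compatible_def)
  then show "val (qsup T) = val X \<or> cfl (qsup T)"
    using conflictI_cfl[OF assms(2)] conflictI_val[OF assms(2) Max_in[OF assms(1)]] \<open>rd Y = rd (Max T)\<close>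
      assms(1,2) by force
qed

lemma compatible_after_snapshot:
  assumes "0 < m" "i < m" "compatible X (V i)" "after_snapshot m v V = Wr x Y"
  shows "compatible X Y"
proof (cases "uniform m V")
  case True
  then have "Y = next_round (V 0)"
    using after_snapshot_uniform_Wr[OF assms(1) True assms(4)] by simp
  moreover have "X \<le> V 0"
    using assms(3) uniform_all[OF True assms(2)] by (simp add: compatible_def)
  ultimately show ?thesis by (simp add: compatible_if_rd_less rd_mono less_Suc_eq_le)
next
  case False
  then show ?thesis
    using after_snapshot_nonuniform_Wr[OF assms(1) False assms(4)] assms(2,3)
    by (auto intro: compatible_qsup)
qed

lemma card_lt_imp_ex_not:
  assumes "card {i. i < (n::nat) \<and> P i} < n"
  shows "\<exists>i<n. \<not> P i"
proof (rule ccontr)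
  assume "\<not> (\<exists>i<n. \<not> P i)"
  then have "{i. i < n \<and> P i} = {..<n}" by auto
  then show False using assms by simp
qed

locale execution =
  fixes n :: nat and props :: "nat \<Rightarrow> 'v::linorder" and sched :: "nat \<Rightarrow> nat"
  assumes sched_less: "sched t < n"
begin

definition mem :: "nat \<Rightarrow> 'v memory" where "mem t = fst (run n props sched t)"
definition pcs :: "nat \<Rightarrow> nat \<Rightarrow> 'v pc" where "pcs t = snd (run n props sched t)"

lemma n_pos: "0 < n"
  using sched_less[of 0] by simp

lemma mem_0: "mem 0 = (\<lambda>_. init_quad)" and pcs_0: "pcs 0 = (\<lambda>_. Snap)"
  by (simp_all add: mem_def pcs_def)

lemma step_Snap:
  assumes "sched t = p" "pcs t p = Snap"
  shows "mem (Suc t) = mem t" "pcs (Suc t) = (pcs t)(p := after_snapshot n (props p) (mem t))"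
  using assms by (simp_all add: mem_def pcs_def sys_step_def split: prod.split)

lemma step_Wr:
  assumes "sched t = p" "pcs t p = Wr x Y"
  shows "mem (Suc t) = (mem t)(x := Y)" "pcs (Suc t) = (pcs t)(p := Snap)"
  using assms by (simp_all add: mem_def pcs_def sys_step_def split: prod.split)

lemma step_Done:
  assumes "sched t = p" "pcs t p = Done w"
  shows "mem (Suc t) = mem t" "pcs (Suc t) = pcs t"
  using assms by (simp_all add: mem_def pcs_def sys_step_def fun_upd_idem split: prod.split)

lemma pcs_Suc_other: "q \<noteq> sched t \<Longrightarrow> pcs (Suc t) q = pcs t q"
  by (cases "pcs t (sched t)") (simp_all add: step_Snap step_Wr step_Done)

definition uniform_snap :: "nat \<Rightarrow> bool" where
  "uniform_snap t \<longleftrightarrow> pcs t (sched t) = Snap \<and> uniform n (mem t)"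

section \<open>Safety\<close>

definition stale_regs :: "'v quad \<Rightarrow> nat \<Rightarrow> nat set" where
  "stale_regs X t = {i. i < n \<and> \<not> compatible X (mem t i)}"

definition stale_writers :: "'v quad \<Rightarrow> nat \<Rightarrow> nat set" where
  "stale_writers X t = {q. q < n \<and> (\<exists>x Y. pcs t q = Wr x Y \<and> \<not> compatible X Y)}"

definition stale_count :: "'v quad \<Rightarrow> nat \<Rightarrow> nat" where
  "stale_count X t = card (stale_regs X t) + card (stale_writers X t)"

lemma finite_stale_regs: "finite (stale_regs X t)"
  by (simp add: stale_regs_def)

lemma finite_stale_writers: "finite (stale_writers X t)"
  by (simp add: stale_writers_def)

text \<open>A register becomes incompatible only by a pending incompatible write, which is consumed;
  a snapshot creates no incompatible write as long as some register is compatible.\<close>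

lemma stale_count_Suc_le:
  assumes "\<exists>i<n. compatible X (mem t i)"
  shows "stale_count X (Suc t) \<le> stale_count X t"
proof (cases "pcs t (sched t)")
  case Snap
  note st = step_Snap[OF refl Snap]
  have "stale_writers X (Suc t) \<subseteq> stale_writers X t"
  proof
    fix q assume "q \<in> stale_writers X (Suc t)"
    then obtain x Y where q: "q < n" "pcs (Suc t) q = Wr x Y" "\<not> compatible X Y"
      unfolding stale_writers_def by blast
    have "q \<noteq> sched t"
    proof
      assume "q = sched t"
      then have "after_snapshot n (props q) (mem t) = Wr x Y" using q(2) by (simp add: st(2))
      then show False using assms q(3) compatible_after_snapshot[OF n_pos] by blast
    qed
    then have "pcs t q = Wr x Y" using q(2) by (simp add: st(2))
    then show "q \<in> stale_writers X t" using q unfolding stale_writers_def by blast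
  qed
  then show ?thesis
    unfolding stale_count_def stale_regs_def st(1) by (simp add: card_mono finite_stale_writers)
next
  case (Wr x Y)
  note st = step_Wr[OF refl Wr]
  have writers: "stale_writers X (Suc t) = stale_writers X t - {sched t}"
    unfolding stale_writers_def st(2) by (auto simp del: split_paired_Ex)
  show ?thesis
  proof (cases "compatible X Y")
    case True
    then have "stale_regs X (Suc t) \<subseteq> stale_regs X t"
      unfolding stale_regs_def st(1) by auto
    then show ?thesis unfolding stale_count_def writers
      by (intro add_mono card_mono card_Diff1_le finite_stale_regs finite_stale_writers)
  next
    case False
    have "stale_regs X (Suc t) \<subseteq> insert x (stale_regs X t)"
      unfolding stale_regs_def st(1) by auto
    then have "card (stale_regs X (Suc t)) \<le> card (insert x (stale_regs X t))"
      by (simp add: card_mono finite_stale_regs)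
    also have "\<dots> \<le> Suc (card (stale_regs X t))"
      by (simp add: card_insert_if finite_stale_regs)
    moreover have "sched t \<in> stale_writers X t"
      using Wr False sched_less unfolding stale_writers_def by blast
    then have "Suc (card (stale_writers X (Suc t))) = card (stale_writers X t)"
      unfolding writers by (rule card_Suc_Diff1[OF finite_stale_writers])
    ultimately show ?thesis unfolding stale_count_def by linarith
  qed
next
  case (Done w)
  then show ?thesis
    unfolding stale_count_def stale_regs_def stale_writers_def step_Done[OF refl Done] by simp
qed

lemma ex_compatible_if_stale_count_less:
  "stale_count X t < n \<Longrightarrow> \<exists>i<n. compatible X (mem t i)"
  using card_lt_imp_ex_not[of n "\<lambda>i. \<not> compatible X (mem t i)"]
  by (simp add: stale_count_def stale_regs_def)

lemma stale_count_after_uniform_snap: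
  assumes "uniform_snap t0" "t0 < t"
  shows "stale_count (mem t0 0) t < n"
  using assms(2)
proof (induction t)
  case (Suc t)
  define X where "X = mem t0 0"
  show ?case
  proof (cases "t = t0")
    case True
    have un: "uniform n (mem t0)" and snap: "pcs t0 (sched t0) = Snap"
      using assms(1) by (simp_all add: uniform_snap_def)
    note st = step_Snap[OF refl snap]
    have "mem (Suc t0) i = X" if "i < n" for i
      using uniform_all[OF un that] by (simp add: st(1) X_def)
    then have regs: "stale_regs X (Suc t0) = {}"
      by (simp add: stale_regs_def)
    have "stale_writers X (Suc t0) \<subseteq> {..<n} - {sched t0}"
    proof
      fix q assume "q \<in> stale_writers X (Suc t0)"
      then obtain x Y where q: "q < n" "pcs (Suc t0) q = Wr x Y" "\<not> compatible X Y"
        unfolding stale_writers_def by blast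
      have "q \<noteq> sched t0"
      proof
        assume "q = sched t0"
        then have "Y = next_round X"
          using q(2) after_snapshot_uniform_Wr[OF n_pos un] by (simp add: st(2) X_def)
        then show False using q(3) compatible_if_rd_less[of X Y] by simp
      qed
      then show "q \<in> {..<n} - {sched t0}" using q(1) by simp
    qed
    then have "card (stale_writers X (Suc t0)) \<le> card ({..<n} - {sched t0})"
      by (simp add: card_mono)
    moreover have "card ({..<n} - {sched t0}) < n"
      using sched_less[of t0] n_pos by simp
    ultimately show ?thesis using True regs by (simp add: stale_count_def X_def)
  next
    case False
    then have "stale_count X t < n" using Suc by (simp add: X_def)
    then show ?thesis
      using stale_count_Suc_le[OF ex_compatible_if_stale_count_less] le_less_trans by (metis X_def)
  qed
qed simp

lemma compatible_uniform_snaps: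
  assumes "uniform_snap t1" "uniform_snap t2" "t1 \<le> t2"
  shows "compatible (mem t1 0) (mem t2 0)"
proof (cases "t1 = t2")
  case False
  then have "t1 < t2" using assms(3) by simp
  then obtain i where "i < n" "compatible (mem t1 0) (mem t2 i)"
    using ex_compatible_if_stale_count_less stale_count_after_uniform_snap[OF assms(1)] by blast
  moreover have "mem t2 i = mem t2 0"
    using assms(2) \<open>i < n\<close> uniform_all unfolding uniform_snap_def by blast
  ultimately show ?thesis by simp
qed (simp add: compatible_refl)

text \<open>Every quadruplet of round \<open>r \<ge> 2\<close> stems from a uniform snapshot of round \<open>r - 1\<close>
  carrying the same value; an \<open>up\<close> one from a conflict-free \<open>down\<close> snapshot.\<close>

definition justified :: "nat \<Rightarrow> 'v quad \<Rightarrow> bool" where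
  "justified t Y \<longleftrightarrow>
     (0 < rd Y \<longrightarrow> (\<exists>q<n. val Y = Some (props q))) \<and> (lvl Y \<longrightarrow> 2 \<le> rd Y) \<and>
     (2 \<le> rd Y \<longrightarrow> (\<exists>t'<t. uniform_snap t' \<and> rd (mem t' 0) + 1 = rd Y \<and>
        val (mem t' 0) = val Y \<and> (lvl Y \<longrightarrow> \<not> lvl (mem t' 0) \<and> \<not> cfl (mem t' 0))))"

definition decided_before :: "nat \<Rightarrow> 'v option \<Rightarrow> bool" where
  "decided_before t w \<longleftrightarrow>
     (\<exists>t'<t. uniform_snap t' \<and> lvl (mem t' 0) \<and> \<not> cfl (mem t' 0) \<and> val (mem t' 0) = w)"

definition history_inv :: "nat \<Rightarrow> bool" where
  "history_inv t \<longleftrightarrow> (\<forall>i. justified t (mem t i)) \<and>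
     (\<forall>q x Y. pcs t q = Wr x Y \<longrightarrow> justified t Y) \<and>
     (\<forall>q w. pcs t q = Done w \<longrightarrow> decided_before t w)"

lemma justified_Suc: "justified t Y \<Longrightarrow> justified (Suc t) Y"
  unfolding justified_def using less_Suc_eq by blast

lemma decided_before_Suc: "decided_before t w \<Longrightarrow> decided_before (Suc t) w"
  unfolding decided_before_def using less_Suc_eq by blast

lemma justified_next_round:
  assumes "uniform_snap t" "justified t (mem t 0)"
  shows "justified (Suc t) (next_round (mem t 0))"
proof -
  have "0 < rd (mem t 0)" using assms(1) by (simp add: uniform_snap_def uniform_def)
  then show ?thesis
    using assms unfolding justified_def next_round_def by auto
qed

lemma justified_qsup:
  assumes "\<forall>i. justified t (mem t i)" "p < n"
  shows "justified t (qsup (mem t ` {..<n} \<union> {proposal_quad (props p)}))"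
proof -
  let ?T = "mem t ` {..<n} \<union> {proposal_quad (props p)}"
  have "Max ?T \<in> ?T" by (intro Max_in) simp_all
  moreover have "justified t (proposal_quad (props p))"
    using assms(2) by (auto simp: justified_def proposal_quad_def)
  ultimately have "justified t (Max ?T)" using assms(1) by (auto simp del: Un_insert_right)
  then show ?thesis unfolding justified_def by simp
qed

lemma justified_after_snapshot:
  assumes "history_inv t" "sched t = p" "pcs t p = Snap" "after_snapshot n (props p) (mem t) = Wr x Y"
  shows "justified (Suc t) Y"
proof (cases "uniform n (mem t)")
  case True
  then have "Y = next_round (mem t 0)"
    using after_snapshot_uniform_Wr[OF n_pos True assms(4)] by simp
  moreover have "uniform_snap t" using True assms(2,3) by (simp add: uniform_snap_def)
  ultimately show ?thesis
    using assms(1) justified_next_round by (simp add: history_inv_def)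
next
  case False
  then show ?thesis
    using assms(1,2) after_snapshot_nonuniform_Wr[OF n_pos False assms(4)] sched_less[of t]
      justified_qsup justified_Suc by (simp add: history_inv_def)
qed

lemma decided_before_after_snapshot:
  assumes "sched t = p" "pcs t p = Snap" "after_snapshot n (props p) (mem t) = Done w"
  shows "decided_before (Suc t) w"
proof -
  have un: "uniform n (mem t)" and "lvl (mem t 0) \<and> \<not> cfl (mem t 0) \<and> val (mem t 0) = w"
    using after_snapshot_Done[OF n_pos assms(3)] by simp_all
  moreover have "uniform_snap t" using un assms(1,2) by (simp add: uniform_snap_def)
  ultimately show ?thesis unfolding decided_before_def by blast
qed

lemma history_inv_Suc:
  assumes inv: "history_inv t"
  shows "history_inv (Suc t)"
proof (cases "pcs t (sched t)")
  case Snap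
  note st = step_Snap[OF refl Snap]
  show ?thesis
    using inv justified_Suc decided_before_Suc
      justified_after_snapshot[OF inv refl Snap] decided_before_after_snapshot[OF refl Snap]
    unfolding history_inv_def st by (auto simp del: split_paired_All)
next
  case (Wr x Y)
  note st = step_Wr[OF refl Wr]
  have "justified t Y" using inv Wr unfolding history_inv_def by blast
  then show ?thesis
    using inv justified_Suc decided_before_Suc
    unfolding history_inv_def st by (auto simp del: split_paired_All)
next
  case (Done w)
  then show ?thesis
    using inv justified_Suc decided_before_Suc
    unfolding history_inv_def step_Done[OF refl Done] by blast
qed

lemma history_inv: "history_inv t"
proof (induction t)
  case 0
  show ?case by (simp add: history_inv_def justified_def mem_0 pcs_0 init_quad_def)
qed (rule history_inv_Suc)

lemma justified_mem: "justified t (mem t i)"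
  using history_inv[of t] by (simp add: history_inv_def)

lemma decided_before_if_Done: "pcs t p = Done w \<Longrightarrow> decided_before t w"
  using history_inv[of t] unfolding history_inv_def by blast

lemma uniform_snap_rd_pos: "uniform_snap t \<Longrightarrow> 0 < rd (mem t 0)"
  by (simp add: uniform_snap_def uniform_def)

lemma uniform_snap_predecessor:
  assumes "uniform_snap t" "2 \<le> rd (mem t 0)"
  obtains t' where "t' < t" "uniform_snap t'" "rd (mem t' 0) + 1 = rd (mem t 0)"
    "val (mem t' 0) = val (mem t 0)" "lvl (mem t 0) \<Longrightarrow> \<not> lvl (mem t' 0) \<and> \<not> cfl (mem t' 0)"
  using justified_mem[of t 0] assms(2) unfolding justified_def by blast

lemma uniform_snap_up_predecessor:
  assumes "uniform_snap t" "lvl (mem t 0)"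
  obtains t' where "uniform_snap t'" "rd (mem t' 0) + 1 = rd (mem t 0)"
    "val (mem t' 0) = val (mem t 0)" "\<not> cfl (mem t' 0)"
proof -
  have "2 \<le> rd (mem t 0)" using justified_mem[of t 0] assms(2) by (simp add: justified_def)
  then show ?thesis using uniform_snap_predecessor[OF assms(1)] assms(2) that by metis
qed

lemma conflict_free_uniform_snaps_agree:
  assumes "uniform_snap t1" "uniform_snap t2" "rd (mem t1 0) = rd (mem t2 0)"
    "\<not> cfl (mem t1 0)" "\<not> cfl (mem t2 0)"
  shows "val (mem t1 0) = val (mem t2 0)"
  using compatible_uniform_snaps[OF assms(1,2)] compatible_uniform_snaps[OF assms(2,1)] assms(3-5)
  by (cases "t1 \<le> t2") (simp_all add: compatible_def)

text \<open>A later uniform snapshot of the same round as a decision snapshot is itself \<open>up\<close>; if it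
  carries a conflict, both values go back to conflict-free \<open>down\<close> snapshots of the previous round,
  which agree.\<close>

lemma uniform_snap_same_round_as_decision:
  assumes d: "uniform_snap t0" "lvl (mem t0 0)" "\<not> cfl (mem t0 0)"
    and u: "uniform_snap t" "rd (mem t 0) = rd (mem t0 0)"
  shows "val (mem t 0) = val (mem t0 0)"
proof (cases "t \<le> t0")
  case True
  then show ?thesis
    using compatible_uniform_snaps[OF u(1) d(1)] d(3) u(2) by (simp add: compatible_def)
next
  case False
  then have c: "compatible (mem t0 0) (mem t 0)" using compatible_uniform_snaps[OF d(1) u(1)] by simp
  then have up: "lvl (mem t 0)" using d(2) u(2) by (auto simp: compatible_def quad_le_iff)
  show ?thesis
  proof (cases "cfl (mem t 0)")
    case False
    then show ?thesis using c u(2) by (simp add: compatible_def)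
  next
    case True
    obtain t3 where t3: "uniform_snap t3" "rd (mem t3 0) + 1 = rd (mem t 0)"
      "val (mem t3 0) = val (mem t 0)" "\<not> cfl (mem t3 0)"
      using uniform_snap_up_predecessor[OF u(1) up] by blast
    obtain t4 where t4: "uniform_snap t4" "rd (mem t4 0) + 1 = rd (mem t0 0)"
      "val (mem t4 0) = val (mem t0 0)" "\<not> cfl (mem t4 0)"
      using uniform_snap_up_predecessor[OF d(1,2)] by blast
    show ?thesis
      using conflict_free_uniform_snaps_agree[OF t3(1) t4(1)] t3 t4 u(2) by simp
  qed
qed

lemma uniform_snap_after_decision_round:
  assumes d: "uniform_snap t0" "lvl (mem t0 0)" "\<not> cfl (mem t0 0)"
  shows "uniform_snap t \<Longrightarrow> rd (mem t0 0) \<le> rd (mem t 0) \<Longrightarrow> val (mem t 0) = val (mem t0 0)"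
proof (induction "rd (mem t 0) - rd (mem t0 0)" arbitrary: t)
  case 0
  then show ?case using uniform_snap_same_round_as_decision[OF d] by simp
next
  case (Suc k)
  have "2 \<le> rd (mem t 0)" using Suc.hyps(2) uniform_snap_rd_pos[OF d(1)] by simp
  then obtain t' where "uniform_snap t'" "rd (mem t' 0) + 1 = rd (mem t 0)"
      "val (mem t' 0) = val (mem t 0)"
    using uniform_snap_predecessor[OF Suc.prems(1)] by metis
  then show ?case using Suc.hyps Suc.prems by fastforce
qed

theorem agreement:
  assumes "pcs t p = Done w" "pcs t' q = Done w'"
  shows "w = w'"
proof -
  obtain t1 where t1: "uniform_snap t1" "lvl (mem t1 0)" "\<not> cfl (mem t1 0)" "val (mem t1 0) = w"
    using decided_before_if_Done[OF assms(1)] unfolding decided_before_def by blast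
  obtain t2 where t2: "uniform_snap t2" "lvl (mem t2 0)" "\<not> cfl (mem t2 0)" "val (mem t2 0) = w'"
    using decided_before_if_Done[OF assms(2)] unfolding decided_before_def by blast
  show ?thesis
  proof (cases "rd (mem t1 0) \<le> rd (mem t2 0)")
    case True
    then show ?thesis using uniform_snap_after_decision_round[OF t1(1-3) t2(1)] t1(4) t2(4) by simp
  next
    case False
    then show ?thesis using uniform_snap_after_decision_round[OF t2(1-3) t1(1)] t1(4) t2(4) by simp
  qed
qed

theorem validity:
  assumes "pcs t p = Done w"
  shows "\<exists>q<n. w = Some (props q)"
proof -
  obtain t1 where "uniform_snap t1" "val (mem t1 0) = w"
    using decided_before_if_Done[OF assms] unfolding decided_before_def by blast
  then show ?thesis
    using justified_mem[of t1 0] uniform_snap_rd_pos by (auto simp: justified_def)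
qed

section \<open>Obstruction-free termination\<close>

text \<open>Running alone, a process first overwrites the registers one by one with the supremum \<open>S\<close>
  it computes, which does not change \<open>S\<close>; once the view is uniform it moves to the next round,
  from a conflict to \<open>down\<close> and from \<open>down\<close> to \<open>up\<close>, where it decides. Hence the following
  potential decreases with every write of the solo process.\<close>

definition solo_view :: "nat \<Rightarrow> 'v memory \<Rightarrow> 'v quad \<Rightarrow> bool" where
  "solo_view p V S \<longleftrightarrow> (\<exists>i<n. V i = S) \<and> qsup (V ` {..<n} \<union> {proposal_quad (props p)}) = S"

definition stage :: "'v quad \<Rightarrow> nat" where
  "stage S = (if cfl S then 2 else if lvl S then 0 else 1)"

definition solo_potential :: "'v quad \<Rightarrow> 'v memory \<Rightarrow> nat" where
  "solo_potential S V = card {i. i < n \<and> V i \<noteq> S} + n * stage S"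

lemma solo_view_after_write:
  assumes "after_snapshot n (props p) V = Wr x Y"
  shows "solo_view p (V(x := Y)) Y"
proof (cases "uniform n V")
  case True
  then have x: "x = 0" and Y: "Y = next_round (V 0)"
    using after_snapshot_uniform_Wr[OF n_pos True assms] by simp_all
  have rd: "0 < rd (V 0)" using True by (simp add: uniform_def)
  let ?T = "V(x := Y) ` {..<n} \<union> {proposal_quad (props p)}"
  have "(V(x := Y)) i \<in> {Y, V 0}" if "i < n" for i
    using uniform_all[OF True that] by simp
  then have "?T \<subseteq> {Y, V 0, proposal_quad (props p)}" by blast
  then have lower: "rd q < rd Y" if "q \<in> ?T" "q \<noteq> Y" for q
    using that rd by (auto simp: Y proposal_quad_def)
  have "qsup ?T = Y"
  proof (rule qsup_eqI)
    show "Y \<in> ?T" using n_pos by (simp add: x)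
    show "q \<le> Y" if "q \<in> ?T" for q
      using lower[OF that] quad_less_if_rd_less[of q Y] by (cases "q = Y") simp_all
    show "\<not> cfl q \<and> val q = val Y" if "\<not> cfl Y" "q \<in> ?T" "rd q = rd Y" for q
      using lower[OF that(2)] that by (cases "q = Y") simp_all
  qed simp
  moreover have "(V(x := Y)) 0 = Y" by (simp add: x)
  ultimately show ?thesis using n_pos unfolding solo_view_def by blast
next
  case False
  note Wr = after_snapshot_nonuniform_Wr[OF n_pos False assms]
  let ?T = "V ` {..<n} \<union> {proposal_quad (props p)}"
  have "qsup (V(x := Y) ` {..<n} \<union> {proposal_quad (props p)}) = qsup ?T"
    by (rule qsup_subset_insert_qsup) (use Wr in auto)
  then show ?thesis using Wr by (auto simp: solo_view_def)
qed

lemma solo_potential_after_write: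
  assumes "solo_view p V S" "after_snapshot n (props p) V = Wr x Y"
  shows "solo_potential Y (V(x := Y)) < solo_potential S V"
proof (cases "uniform n V")
  case True
  then have x: "x = 0" and Y: "Y = next_round (V 0)"
    using after_snapshot_uniform_Wr[OF n_pos True assms(2)] by simp_all
  have S: "S = V 0" using assms(1) uniform_all[OF True] unfolding solo_view_def by metis
  have "\<not> (lvl (V 0) \<and> \<not> cfl (V 0))"
    using assms(2) unfolding after_snapshot_uniform[OF n_pos True] by (auto split: if_splits)
  then have stage: "stage S = Suc (stage Y)" by (auto simp: stage_def S Y next_round_def)
  have "{i. i < n \<and> (V(x := Y)) i \<noteq> Y} \<subseteq> {..<n} - {0}" by (auto simp: x)
  then have "card {i. i < n \<and> (V(x := Y)) i \<noteq> Y} \<le> card ({..<n} - {0::nat})"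
    by (simp add: card_mono)
  then have "card {i. i < n \<and> (V(x := Y)) i \<noteq> Y} < n"
    using n_pos by simp
  moreover have "{i. i < n \<and> V i \<noteq> S} = {}" using uniform_all[OF True] S by blast
  ultimately show ?thesis by (simp add: solo_potential_def stage)
next
  case False
  note Wr = after_snapshot_nonuniform_Wr[OF n_pos False assms(2)]
  then have Y: "Y = S" using assms(1) by (simp add: solo_view_def)
  have "{i. i < n \<and> (V(x := Y)) i \<noteq> Y} = {i. i < n \<and> V i \<noteq> S} - {x}" by (auto simp: Y)
  moreover have "x \<in> {i. i < n \<and> V i \<noteq> S}" using Wr unfolding Y by blast
  then have "card ({i. i < n \<and> V i \<noteq> S} - {x}) < card {i. i < n \<and> V i \<noteq> S}"
    by (intro card_Diff1_less) simp_all
  ultimately show ?thesis unfolding solo_potential_def Y by simp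
qed

lemma solo_write_steps:
  assumes "sched t = p" "sched (Suc t) = p" "pcs t p = Snap"
    "after_snapshot n (props p) (mem t) = Wr x Y"
  shows "pcs (Suc (Suc t)) p = Snap" "mem (Suc (Suc t)) = (mem t)(x := Y)"
proof -
  have "pcs (Suc t) p = Wr x Y" "mem (Suc t) = mem t"
    using step_Snap[OF assms(1,3)] assms(4) by simp_all
  then show "pcs (Suc (Suc t)) p = Snap" "mem (Suc (Suc t)) = (mem t)(x := Y)"
    using step_Wr[OF assms(2)] by simp_all
qed

lemma solo_decides_from_view:
  assumes solo: "\<forall>t\<ge>T0. sched t = p"
  shows "T0 \<le> t \<Longrightarrow> pcs t p = Snap \<Longrightarrow> solo_view p (mem t) S \<Longrightarrow> \<exists>t' w. pcs t' p = Done w"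
proof (induction "solo_potential S (mem t)" arbitrary: t S rule: less_induct)
  case less
  have s: "sched t = p" "sched (Suc t) = p" using solo less.prems(1) by simp_all
  show ?case
  proof (cases "after_snapshot n (props p) (mem t)")
    case (Done w)
    then have "pcs (Suc t) p = Done w" using step_Snap[OF s(1) less.prems(2)] by simp
    then show ?thesis by blast
  next
    case (Wr x Y)
    note st = solo_write_steps[OF s less.prems(2) Wr]
    have "solo_potential Y (mem (Suc (Suc t))) < solo_potential S (mem t)"
      using solo_potential_after_write[OF less.prems(3) Wr] by (simp add: st(2))
    moreover have "solo_view p (mem (Suc (Suc t))) Y"
      using solo_view_after_write[OF Wr] by (simp add: st(2))
    ultimately show ?thesis using less.hyps st(1) less.prems(1) by simp
  qed (simp add: after_snapshot_neq_Snap[OF n_pos])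
qed

theorem obstruction_free_termination:
  assumes solo: "\<forall>t\<ge>T0. sched t = p"
  shows "\<exists>t w. pcs t p = Done w"
proof -
  obtain t where t: "T0 \<le> t" "pcs t p = Snap \<or> (\<exists>w. pcs t p = Done w)"
  proof (cases "pcs T0 p")
    case (Wr x Y)
    then show ?thesis using that[of "Suc T0"] step_Wr[of T0 p x Y] solo by simp
  qed (use that in auto)
  show ?thesis
  proof (cases "pcs t p")
    case Snap
    have s: "sched t = p" "sched (Suc t) = p" using solo t(1) by simp_all
    show ?thesis
    proof (cases "after_snapshot n (props p) (mem t)")
      case (Done w)
      then have "pcs (Suc t) p = Done w" using step_Snap[OF s(1) Snap] by simp
      then show ?thesis by blast
    next
      case (Wr x Y)
      note st = solo_write_steps[OF s Snap Wr]
      have "solo_view p (mem (Suc (Suc t))) Y"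
        using solo_view_after_write[OF Wr] by (simp add: st(2))
      then show ?thesis using solo_decides_from_view[OF solo _ st(1)] t(1) by simp
    qed (simp add: after_snapshot_neq_Snap[OF n_pos])
  qed (use t in auto)
qed

section \<open>Termination with a common proposal\<close>

lemma pcs_unchanged_while_unscheduled:
  "(\<forall>u. a \<le> u \<and> u < a + k \<longrightarrow> sched u \<noteq> p) \<Longrightarrow> pcs (a + k) p = pcs a p"
proof (induction k)
  case (Suc k)
  have "p \<noteq> sched (a + k)" using Suc.prems[rule_format, of "a + k"] by auto
  then show ?case using Suc pcs_Suc_other[of p "a + k"] by simp
qed simp

lemma next_step_of:
  assumes "\<forall>T. \<exists>t\<ge>T. sched t = p"
  obtains b where "a \<le> b" "sched b = p" "pcs b p = pcs a p"
proof -
  define b where "b = (LEAST b. a \<le> b \<and> sched b = p)"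
  have "\<exists>b. a \<le> b \<and> sched b = p" using assms by blast
  then have b: "a \<le> b" "sched b = p" unfolding b_def by (metis (mono_tags, lifting) LeastI_ex)+
  have "sched u \<noteq> p" if "a \<le> u" "u < b" for u
    using not_less_Least[of u "\<lambda>b. a \<le> b \<and> sched b = p"] that unfolding b_def by blast
  then have "\<forall>u. a \<le> u \<and> u < a + (b - a) \<longrightarrow> sched u \<noteq> p" using b(1) by simp
  then have "pcs b p = pcs a p"
    using pcs_unchanged_while_unscheduled[of a "b - a" p] b(1) by simp
  then show ?thesis using that b by blast
qed

lemma next_Snap_step_of:
  assumes "\<forall>T. \<exists>t\<ge>T. sched t = p" "\<forall>t w. pcs t p \<noteq> Done w"
  obtains s where "a \<le> s" "sched s = p" "pcs s p = Snap"
proof -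
  obtain t where t: "a \<le> t" "sched t = p" using assms(1) by blast
  show ?thesis
  proof (cases "pcs t p")
    case (Wr x Y)
    then have "pcs (Suc t) p = Snap" using step_Wr[OF t(2)] by simp
    then show ?thesis using next_step_of[OF assms(1), of "Suc t"] that t(1) by (metis le_SucI le_trans)
  qed (use assms(2) t that in auto)
qed

end

lemma sum_lessThan_fun_upd:
  fixes h :: "'a \<Rightarrow> nat" and x n :: nat
  assumes "x < n"
  shows "(\<Sum>i<n. h ((V(x := Y)) i)) + h (V x) = (\<Sum>i<n. h (V i)) + h Y"
proof -
  have x: "x \<in> {..<n}" using assms by simp
  have "(\<Sum>i\<in>{..<n} - {x}. h ((V(x := Y)) i)) = (\<Sum>i\<in>{..<n} - {x}. h (V i))"
    by (rule sum.cong) auto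
  moreover have "(\<Sum>i<n. h ((V(x := Y)) i)) = h Y + (\<Sum>i\<in>{..<n} - {x}. h ((V(x := Y)) i))"
    using sum.remove[OF finite_lessThan x, of "\<lambda>i. h ((V(x := Y)) i)"] by simp
  moreover have "(\<Sum>i<n. h (V i)) = h (V x) + (\<Sum>i\<in>{..<n} - {x}. h (V i))"
    using sum.remove[OF finite_lessThan x] .
  ultimately show ?thesis by simp
qed

lemma sum_lessThan_drop_one_le:
  fixes g g' :: "nat \<Rightarrow> nat" and p n :: nat
  assumes "p < n" "g' p = 0" "\<And>q. q < n \<Longrightarrow> q \<noteq> p \<Longrightarrow> g' q \<le> g q + b"
  shows "(\<Sum>q<n. g' q) + g p \<le> (\<Sum>q<n. g q) + n * b"
proof -
  have "(\<Sum>q<n. g' q + (if q = p then g p else 0)) \<le> (\<Sum>q<n. g q + b)"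
    by (rule sum_mono) (use assms in auto)
  then show ?thesis using assms(1) by (simp add: sum.distrib)
qed

locale sv_execution = execution n props sched
  for n and props :: "nat \<Rightarrow> 'v::linorder" and sched +
  assumes same_props: "p < n \<Longrightarrow> q < n \<Longrightarrow> props p = props q"
begin

definition sv_down :: "'v quad" where "sv_down = proposal_quad (props 0)"
definition sv_up :: "'v quad" where "sv_up = (2, True, False, Some (props 0))"

lemma sv_quads_distinct [simp]:
  "sv_down \<noteq> sv_up" "sv_up \<noteq> sv_down" "sv_down \<noteq> init_quad" "init_quad \<noteq> sv_down"
  "sv_up \<noteq> init_quad" "init_quad \<noteq> sv_up"
  by (simp_all add: sv_down_def sv_up_def proposal_quad_def init_quad_def)

lemma sv_quads_sel [simp]:
  "rd sv_down = 1" "rd sv_up = 2" "rd init_quad = 0" "lvl sv_down = False" "lvl sv_up = True"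
  "cfl sv_down = False" "cfl sv_up = False" "next_round sv_down = sv_up"
  by (simp_all add: sv_down_def sv_up_def proposal_quad_def init_quad_def next_round_def)

lemma proposal_quad_eq_sv_down: "p < n \<Longrightarrow> proposal_quad (props p) = sv_down"
  using same_props[of p 0] n_pos by (simp add: sv_down_def)

lemma qsup_sv_quads:
  assumes "T \<subseteq> {init_quad, sv_down, sv_up}" "sv_down \<in> T"
  shows "qsup T = (if sv_up \<in> T then sv_up else sv_down)"
proof -
  have fin: "finite T" using assms(1) finite_subset by blast
  have less: "init_quad < sv_down" "sv_down < sv_up" "init_quad < sv_up"
    by (simp_all add: quad_less_if_rd_less)
  show ?thesis
  proof (cases "sv_up \<in> T")
    case True
    have "qsup T = sv_up"
      by (rule qsup_eqI[OF fin True]) (use assms(1) less in \<open>auto simp: less_imp_le\<close>)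
    then show ?thesis using True by simp
  next
    case False
    have "qsup T = sv_down"
      by (rule qsup_eqI[OF fin assms(2)]) (use assms(1) less False in \<open>auto simp: less_imp_le\<close>)
    then show ?thesis using False by simp
  qed
qed

lemma sv_after_snapshot:
  assumes "p < n" "\<forall>i<n. V i \<in> {init_quad, sv_down, sv_up}"
    and "after_snapshot n (props p) V = Wr x Y"
  shows "x < n \<and> V x \<noteq> Y \<and> (Y = sv_up \<or> Y = sv_down \<and> V x = init_quad)"
proof (cases "uniform n V")
  case True
  have "V 0 \<in> {init_quad, sv_down, sv_up}" using assms(2) n_pos by blast
  moreover have "0 < rd (V 0)" using True unfolding uniform_def by blast
  ultimately have "V 0 = sv_down \<or> V 0 = sv_up" by auto
  moreover have "\<not> (lvl (V 0) \<and> \<not> cfl (V 0))" and "x = 0 \<and> Y = next_round (V 0)"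
    using assms(3) after_snapshot_uniform_Wr[OF n_pos True] 
    unfolding after_snapshot_uniform[OF n_pos True] by (auto split: if_splits)
  ultimately show ?thesis using n_pos by auto
next
  case False
  let ?T = "V ` {..<n} \<union> {proposal_quad (props p)}"
  have T: "?T \<subseteq> {init_quad, sv_down, sv_up}" "sv_down \<in> ?T"
    using assms(2) proposal_quad_eq_sv_down[OF assms(1)] by auto
  have Y: "Y = qsup ?T" "x < n" "V x \<noteq> Y"
    using after_snapshot_nonuniform_Wr[OF n_pos False assms(3)] by blast+
  have "Y = sv_up \<or> Y = sv_down \<and> sv_up \<notin> ?T"
    using Y(1) qsup_sv_quads[OF T] by presburger
  moreover have "V x \<in> ?T" "V x \<in> {init_quad, sv_down, sv_up}" using Y(2) assms(2) by auto
  ultimately have "Y = sv_up \<or> Y = sv_down \<and> V x \<noteq> sv_up \<and> V x \<noteq> sv_down"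
    using Y(3) by (metis (no_types, lifting))
  then show ?thesis using Y(2,3) \<open>V x \<in> {init_quad, sv_down, sv_up}\<close> by blast
qed

definition sv_inv :: "nat \<Rightarrow> bool" where
  "sv_inv t \<longleftrightarrow> (\<forall>i<n. mem t i \<in> {init_quad, sv_down, sv_up}) \<and>
     (\<forall>q x Y. pcs t q = Wr x Y \<longrightarrow> x < n \<and> Y \<in> {sv_down, sv_up})"

lemma sv_inv: "sv_inv t"
proof (induction t)
  case 0
  show ?case by (simp add: sv_inv_def mem_0 pcs_0)
next
  case (Suc t)
  have mem: "\<forall>i<n. mem t i \<in> {init_quad, sv_down, sv_up}"
    and wr: "\<And>q x Y. pcs t q = Wr x Y \<Longrightarrow> x < n \<and> Y \<in> {sv_down, sv_up}"
    using Suc unfolding sv_inv_def by blast+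
  show ?case
  proof (cases "pcs t (sched t)")
    case Snap
    note st = step_Snap[OF refl Snap]
    have "x < n \<and> Y \<in> {sv_down, sv_up}"
      if "after_snapshot n (props (sched t)) (mem t) = Wr x Y" for x Y
      using sv_after_snapshot[OF sched_less mem that] by auto
    then show ?thesis using mem wr unfolding sv_inv_def st by (auto simp del: split_paired_All)
  next
    case (Wr x Y)
    note st = step_Wr[OF refl Wr]
    have "x < n \<and> Y \<in> {sv_down, sv_up}" using wr Wr by blast
    then show ?thesis using mem wr unfolding sv_inv_def st by (auto simp del: split_paired_All)
  next
    case (Done w)
    show ?thesis using Suc unfolding sv_inv_def step_Done[OF refl Done] .
  qed
qed

lemma sv_mem: "i < n \<Longrightarrow> mem t i \<in> {init_quad, sv_down, sv_up}"
  using sv_inv[of t] by (simp add: sv_inv_def)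

lemma sv_Wr: "pcs t q = Wr x Y \<Longrightarrow> x < n \<and> Y \<in> {sv_down, sv_up}"
  using sv_inv[of t] unfolding sv_inv_def by blast

text \<open>An initial register weighs more than all pending writes together can gain when it is
  overwritten: a pending \<open>down\<close> write weighs 2 once its target is no longer initial. Then every
  write other than \<open>up\<close> over \<open>up\<close> strictly decreases the potential.\<close>

definition reg_weight :: "'v quad \<Rightarrow> nat" where
  "reg_weight Y = (if Y = init_quad then 2 * n + 2 else if Y = sv_down then 1 else 0)"

definition write_weight :: "nat \<Rightarrow> nat \<Rightarrow> nat" where
  "write_weight t q =
     (case pcs t q of Wr x Y \<Rightarrow> if Y = sv_down \<and> mem t x \<noteq> init_quad then 2 else 0 | _ \<Rightarrow> 0)"

definition sv_potential :: "nat \<Rightarrow> nat" where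
  "sv_potential t = (\<Sum>i<n. reg_weight (mem t i)) + (\<Sum>q<n. write_weight t q)"

lemma sv_potential_Snap:
  assumes "pcs t (sched t) = Snap"
  shows "sv_potential (Suc t) = sv_potential t"
proof -
  note st = step_Snap[OF refl assms]
  have "write_weight (Suc t) q = write_weight t q" for q
  proof (cases "q = sched t")
    case True
    have "write_weight (Suc t) q = 0"
    proof (cases "after_snapshot n (props (sched t)) (mem t)")
      case (Wr x Y)
      then have "Y = sv_up \<or> Y = sv_down \<and> mem t x = init_quad"
        using sv_after_snapshot[OF sched_less] sv_mem by blast
      then show ?thesis using True Wr by (auto simp: write_weight_def st)
    qed (use True in \<open>simp_all add: write_weight_def st\<close>)
    then show ?thesis using True assms by (simp add: write_weight_def)
  qed (cases "pcs t q"; simp add: write_weight_def st)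
  then show ?thesis by (simp add: sv_potential_def st)
qed

lemma sv_potential_Wr:
  assumes "pcs t (sched t) = Wr x Y"
  shows "sv_potential (Suc t) \<le> sv_potential t"
    and "\<not> (Y = sv_up \<and> mem t x = sv_up) \<Longrightarrow> sv_potential (Suc t) < sv_potential t"
proof -
  note st = step_Wr[OF refl assms]
  define p c where "p = sched t" and "c = mem t x"
  have x: "x < n" and Y: "Y = sv_down \<or> Y = sv_up" using sv_Wr[OF assms] by auto
  have c: "c = init_quad \<or> c = sv_down \<or> c = sv_up" using sv_mem[OF x] by (simp add: c_def)
  define b where "b = (if c = init_quad then 2 else (0::nat))"
  have regs: "(\<Sum>i<n. reg_weight (mem (Suc t) i)) + reg_weight c =
      (\<Sum>i<n. reg_weight (mem t i)) + reg_weight Y"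
    unfolding st(1) c_def by (rule sum_lessThan_fun_upd[OF x])
  have own: "write_weight t p = (if Y = sv_down \<and> c \<noteq> init_quad then 2 else 0)"
    using assms by (simp add: write_weight_def c_def p_def)
  have "(\<Sum>q<n. write_weight (Suc t) q) + write_weight t p \<le> (\<Sum>q<n. write_weight t q) + n * b"
  proof (rule sum_lessThan_drop_one_le)
    show "p < n" by (simp add: p_def sched_less)
    show "write_weight (Suc t) p = 0" by (simp add: write_weight_def st p_def)
    show "write_weight (Suc t) q \<le> write_weight t q + b" if "q \<noteq> p" for q
      using that by (cases "pcs t q") (auto simp: write_weight_def st b_def c_def p_def)
  qed
  then have pot: "sv_potential (Suc t) + reg_weight c + write_weight t p \<le>
      sv_potential t + reg_weight Y + n * b"
    using regs unfolding sv_potential_def by simp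
  show "\<not> (Y = sv_up \<and> c = sv_up) \<Longrightarrow> sv_potential (Suc t) < sv_potential t"
    using c Y pot own by (auto simp: reg_weight_def b_def)
  then show "sv_potential (Suc t) \<le> sv_potential t"
    using pot own by (cases "Y = sv_up \<and> c = sv_up") (auto simp: reg_weight_def b_def)
qed

lemma sv_potential_Suc_le: "sv_potential (Suc t) \<le> sv_potential t"
proof (cases "pcs t (sched t)")
  case (Done w)
  then show ?thesis unfolding sv_potential_def write_weight_def step_Done[OF refl Done] by simp
qed (simp_all add: sv_potential_Snap sv_potential_Wr)

lemma mem_stable_if_writes_up_over_up:
  assumes steady: "\<forall>s\<ge>t0. \<forall>x Y. pcs s (sched s) = Wr x Y \<longrightarrow> Y = sv_up \<and> mem s x = sv_up"
    and "t0 \<le> s1" "mem s1 i \<noteq> sv_up"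
  shows "mem (s1 + k) i = mem s1 i"
proof (induction k)
  case (Suc k)
  define s where "s = s1 + k"
  have "mem (Suc s) i = mem s i"
  proof (cases "pcs s (sched s)")
    case (Wr x Y)
    have "t0 \<le> s" using assms(2) by (simp add: s_def)
    then have "mem s x = sv_up" using steady Wr by blast
    moreover have "mem s i \<noteq> sv_up" using Suc assms(3) by (simp add: s_def)
    ultimately show ?thesis using step_Wr[OF refl Wr] by auto
  qed (simp_all add: step_Snap step_Done)
  then show ?case using Suc by (simp add: s_def)
qed simp

text \<open>Once the potential is minimal, only \<open>up\<close> is written over \<open>up\<close>, so the register targeted by
  the next write of a never-deciding process keeps the value that process snapshotted; but that
  write differs from the snapshotted value.\<close>

theorem common_proposal_termination:
  assumes "p < n" "\<forall>T. \<exists>t\<ge>T. sched t = p"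
  shows "\<exists>t w. pcs t p = Done w"
proof (rule ccontr)
  assume "\<not> ?thesis"
  then have undecided: "\<forall>t w. pcs t p \<noteq> Done w" by blast
  obtain t0 where min: "\<And>t. sv_potential t0 \<le> sv_potential t"
    using ex_has_least_nat[of "\<lambda>_. True" t sv_potential for t] by blast
  have steady: "\<forall>s\<ge>t0. \<forall>x Y. pcs s (sched s) = Wr x Y \<longrightarrow> Y = sv_up \<and> mem s x = sv_up"
  proof (intro allI impI)
    fix s x Y assume "t0 \<le> s" "pcs s (sched s) = Wr x Y"
    moreover have "sv_potential s \<le> sv_potential t0"
      using lift_Suc_antimono_le[of sv_potential, OF sv_potential_Suc_le \<open>t0 \<le> s\<close>] .
    ultimately show "Y = sv_up \<and> mem s x = sv_up"
      using sv_potential_Wr(2) min[of "Suc s"] by fastforce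
  qed
  obtain s where s: "t0 \<le> s" "sched s = p" "pcs s p = Snap"
    using next_Snap_step_of[OF assms(2) undecided] by blast
  have after: "pcs (Suc s) p = after_snapshot n (props p) (mem s)"
    using step_Snap[OF s(2,3)] by simp
  obtain x Y where snap: "after_snapshot n (props p) (mem s) = Wr x Y"
  proof (cases "after_snapshot n (props p) (mem s)")
    case (Done w)
    then show ?thesis using undecided after by simp
  qed (simp_all add: after_snapshot_neq_Snap[OF n_pos])
  then have x: "x < n" "mem s x \<noteq> Y"
    using sv_after_snapshot[OF assms(1)] sv_mem by blast+
  obtain b where b: "Suc s \<le> b" "sched b = p" "pcs b p = Wr x Y"
    using next_step_of[OF assms(2), of "Suc s"] after snap by metis
  moreover have "t0 \<le> b" using b(1) s(1) by simp
  ultimately have "Y = sv_up" "mem b x = sv_up" using steady by blast+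
  moreover have "mem (s + (b - s)) x = mem s x"
    using mem_stable_if_writes_up_over_up[OF steady s(1)] x \<open>Y = sv_up\<close> by simp
  ultimately show False using x b(1) by simp
qed

end

theorem theorem1:
  fixes n :: nat and props :: "nat \<Rightarrow> 'v::linorder" and sched :: "nat \<Rightarrow> nat"
  assumes "\<forall>t. sched t < n"
  shows
    "(\<forall>p<n. \<forall>t w. decides_at n props sched t p w \<longrightarrow> (\<exists>q<n. w = Some (props q)))
   \<and> (\<forall>p<n. \<forall>q<n. \<forall>t t' w w'. decides_at n props sched t p w \<and> decides_at n props sched t' q w'
          \<longrightarrow> w = w')
   \<and> (\<forall>p<n. \<forall>T. (\<forall>t\<ge>T. sched t = p) \<longrightarrow> (\<exists>t w. decides_at n props sched t p w))
   \<and> ((\<forall>p<n. \<forall>q<n. props p = props q) \<longrightarrow>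
        (\<forall>p<n. (\<forall>T. \<exists>t\<ge>T. sched t = p) \<longrightarrow> (\<exists>t w. decides_at n props sched t p w)))"
proof -
  interpret execution n props sched
    using assms by unfold_locales blast
  have decides: "decides_at n props sched t p w \<longleftrightarrow> pcs t p = Done w" for t p w
    by (simp add: decides_at_def pcs_def)
  have "(\<forall>p<n. \<forall>q<n. props p = props q) \<longrightarrow>
      (\<forall>p<n. (\<forall>T. \<exists>t\<ge>T. sched t = p) \<longrightarrow> (\<exists>t w. pcs t p = Done w))"
  proof (intro impI allI)
    fix p assume "\<forall>p<n. \<forall>q<n. props p = props q" "p < n" "\<forall>T. \<exists>t\<ge>T. sched t = p"
    then interpret sv_execution n props sched
      by unfold_locales blast
    show "\<exists>t w. pcs t p = Done w"
      using common_proposal_termination \<open>p < n\<close> \<open>\<forall>T. \<exists>t\<ge>T. sched t = p\<close> by blast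
  qed
  then show ?thesis
    unfolding decides using validity agreement obstruction_free_termination by blast
qed

end
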